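(* Let $C$ be a nonempty subset of a Banach space $X$ and let $T:C\to C$ be a Kannan mapping. Then $T$ is an orbitally Kannan mapping which diminishes the radius of orbits.
   Context: $T:C\to C$ is Kannan if $\|Tx-Ty\|\le\frac12(\|x-Tx\|+\|y-Ty\|)$ for all $x,y\in C$. For $x\in X$ and $A\subseteq X$, $r_x(A)=\sup\{\|x-y\|:y\in A\}$; $O_T(x)=\{x,Tx,T^2x,\dots\}$. $T$ is orbitally Kannan if $\|Tx-Ty\|\le\frac12\big(r_x(O_T(x))+r_y(O_T(y))\big)$ for all $x,y\in C$. $T$ diminishes the radius of orbits if $r_{Tx}(O_T(Tx))\le r_x(O_T(x))$ for all $x\in C$. *)

theory Defs
  imports "HOL-Analysis.Analysis"
begin

definition kannan :: "'a::real_normed_vector set \<Rightarrow> ('a \<Rightarrow> 'a) \<Rightarrow> bool" where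
  "kannan C T \<longleftrightarrow> (\<forall>x\<in>C. \<forall>y\<in>C.
     norm (T x - T y) \<le> (1/2) * (norm (x - T x) + norm (y - T y)))"

text \<open>Radius of a set with respect to a point; extended-real valued so that
  unbounded sets get radius infinity.\<close>
definition rad :: "'a::real_normed_vector \<Rightarrow> 'a set \<Rightarrow> ereal" where
  "rad x A = (SUP y\<in>A. ereal (norm (x - y)))"

definition orbit :: "('a \<Rightarrow> 'a) \<Rightarrow> 'a \<Rightarrow> 'a set" where
  "orbit T x = range (\<lambda>n. (T ^^ n) x)"

definition orbitally_kannan :: "'a::real_normed_vector set \<Rightarrow> ('a \<Rightarrow> 'a) \<Rightarrow> bool" where
  "orbitally_kannan C T \<longleftrightarrow> (\<forall>x\<in>C. \<forall>y\<in>C.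
     ereal (norm (T x - T y)) \<le> ereal (1/2) * (rad x (orbit T x) + rad y (orbit T y)))"

definition diminishes_orbit_radius :: "'a::real_normed_vector set \<Rightarrow> ('a \<Rightarrow> 'a) \<Rightarrow> bool" where
  "diminishes_orbit_radius C T \<longleftrightarrow> (\<forall>x\<in>C. rad (T x) (orbit T (T x)) \<le> rad x (orbit T x))"

end

theory Submission
  imports Defs
begin

text \<open>Applying the Kannan inequality to the pair \<open>z, T z\<close> shows that the displacement
  \<open>\<parallel>z - T z\<parallel>\<close> does not increase along an orbit. Hence \<open>\<parallel>x - T x\<parallel>\<close>, which is at most
  \<open>r\<^sub>x(O\<^sub>T(x))\<close>, dominates both displacement terms of the Kannan inequality for the pair
  \<open>x, T\<^sup>n x\<close>; this bounds every \<open>\<parallel>T x - T\<^sup>n\<^sup>+\<^sup>1 x\<parallel>\<close>, i.e. the radius of the orbit of \<open>T x\<close>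
  about \<open>T x\<close>.\<close>

lemma funpow_in_invariant_set:
  assumes "T ` C \<subseteq> C" "x \<in> C"
  shows "(T ^^ n) x \<in> C"
  using assms by (induction n) auto

lemma kannan_displacement_step_le:
  assumes "T ` C \<subseteq> C" "kannan C T" "z \<in> C"
  shows "norm (T z - T (T z)) \<le> norm (z - T z)"
proof -
  have "T z \<in> C" using assms(1,3) by auto
  then have "norm (T z - T (T z)) \<le> (1/2) * (norm (z - T z) + norm (T z - T (T z)))"
    using assms(2,3) unfolding kannan_def by blast
  then show ?thesis by simp
qed

lemma kannan_displacement_funpow_le:
  assumes "T ` C \<subseteq> C" "kannan C T" "x \<in> C"
  shows "norm ((T ^^ n) x - T ((T ^^ n) x)) \<le> norm (x - T x)"
proof (induction n)
  case 0
  then show ?case by simp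
next
  case (Suc n)
  have "norm ((T ^^ Suc n) x - T ((T ^^ Suc n) x)) \<le> norm ((T ^^ n) x - T ((T ^^ n) x))"
    using kannan_displacement_step_le[OF assms(1,2) funpow_in_invariant_set[OF assms(1,3)]]
    by simp
  with Suc.IH show ?case by linarith
qed

lemma kannan_dist_orbit_le_displacement:
  assumes "T ` C \<subseteq> C" "kannan C T" "x \<in> C"
  shows "norm (T x - (T ^^ n) (T x)) \<le> norm (x - T x)"
proof -
  have "norm (T x - T ((T ^^ n) x))
      \<le> (1/2) * (norm (x - T x) + norm ((T ^^ n) x - T ((T ^^ n) x)))"
    using assms(2,3) funpow_in_invariant_set[OF assms(1,3)] unfolding kannan_def by blast
  also have "\<dots> \<le> norm (x - T x)"
    using kannan_displacement_funpow_le[OF assms, of n] by simp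
  finally show ?thesis by (simp add: funpow_swap1)
qed

lemma dist_funpow_le_rad_orbit: "ereal (norm (x - (T ^^ n) x)) \<le> rad x (orbit T x)"
  unfolding rad_def orbit_def by (rule SUP_upper) auto

lemma displacement_le_rad_orbit: "ereal (norm (x - T x)) \<le> rad x (orbit T x)"
  using dist_funpow_le_rad_orbit[where n=1] by simp

lemma kannan_rad_orbit_le_displacement:
  assumes "T ` C \<subseteq> C" "kannan C T" "x \<in> C"
  shows "rad (T x) (orbit T (T x)) \<le> ereal (norm (x - T x))"
  unfolding rad_def orbit_def
  using kannan_dist_orbit_le_displacement[OF assms] by (auto intro!: SUP_least)

lemma kannan_imp_orbitally_kannan:
  assumes "kannan C T"
  shows "orbitally_kannan C T"
  unfolding orbitally_kannan_def
proof (intro ballI)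
  fix x y assume "x \<in> C" "y \<in> C"
  then have "ereal (norm (T x - T y)) \<le> ereal ((1/2) * (norm (x - T x) + norm (y - T y)))"
    using assms unfolding kannan_def by simp
  also have "\<dots> = ereal (1/2) * (ereal (norm (x - T x)) + ereal (norm (y - T y)))"
    by simp
  also have "\<dots> \<le> ereal (1/2) * (rad x (orbit T x) + rad y (orbit T y))"
    by (intro ereal_mult_left_mono add_mono displacement_le_rad_orbit) simp
  finally show "ereal (norm (T x - T y)) \<le> ereal (1/2) * (rad x (orbit T x) + rad y (orbit T y))" .
qed

lemma kannan_imp_diminishes_orbit_radius:
  assumes "T ` C \<subseteq> C" "kannan C T"
  shows "diminishes_orbit_radius C T"
  unfolding diminishes_orbit_radius_def
  using kannan_rad_orbit_le_displacement[OF assms] displacement_le_rad_orbit order_trans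
  by blast

theorem lemma4p1:
  fixes C :: "'a::banach set" and T :: "'a \<Rightarrow> 'a"
  assumes "C \<noteq> {}" and "T ` C \<subseteq> C" and "kannan C T"
  shows "orbitally_kannan C T \<and> diminishes_orbit_radius C T"
  using kannan_imp_orbitally_kannan[OF assms(3)]
    kannan_imp_diminishes_orbit_radius[OF assms(2,3)] by blast

end
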